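(* Let $\delta$ be a diagonal section and let $C$ be any bivariate copula with $C(t,t)=\delta(t)$ for all $t\in[0,1]$. Then for every $x,y\in[0,1]$, $$C(x,y)\le \min\left\{x,\;y,\;\max\{x,y\}-\frac12\left(\widehat{\delta}(x)+\widehat{\delta}(y)+\mathrm{TV}_{\min\{x,y\}}^{\max\{x,y\}}(\widehat{\delta})\right)\right\}.$$
   Context: $\mathbb{I}=[0,1]$. A (bivariate) copula is a function $C\colon\mathbb{I}^2\to\mathbb{I}$ with $C(x,0)=C(0,y)=0$, $C(x,1)=x$, $C(1,y)=y$ for all $x,y$, and $C(b,d)+C(a,c)-C(b,c)-C(a,d)\ge 0$ for all $a\le b$, $c\le d$ in $\mathbb{I}$. A diagonal section is a function $\delta\colon\mathbb{I}\to\mathbb{I}$ with $\delta(x)\le x$ for all $x$, $0\le\delta(y)-\delta(x)\le 2(y-x)$ whenever $x\le y$, and $\delta(1)=1$ (equivalently, $\delta$ is the diagonal $t\mapsto C(t,t)$ of some copula). Write $\widehat{\delta}(x)=x-\delta(x)$. For $f\colon\mathbb{I}\to\mathbb{R}$ and $0\le x\le y\le1$, $\mathrm{TV}_x^y(f)=\sup\{\sum_{i=1}^n|f(x_i)-f(x_{i-1})|: x=x_0<x_1<\dots<x_n=y\}$ is the total variation of $f$ on $[x,y]$. *)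

theory Defs
  imports "HOL-Analysis.Analysis"
begin

definition is_copula :: "(real \<Rightarrow> real \<Rightarrow> real) \<Rightarrow> bool" where
  "is_copula C \<longleftrightarrow>
     (\<forall>x. 0 \<le> x \<and> x \<le> 1 \<longrightarrow> C x 0 = 0 \<and> C 0 x = 0 \<and> C x 1 = x \<and> C 1 x = x) \<and>
     (\<forall>a b c d. 0 \<le> a \<and> a \<le> b \<and> b \<le> 1 \<and> 0 \<le> c \<and> c \<le> d \<and> d \<le> 1 \<longrightarrow>
        C b d + C a c - C b c - C a d \<ge> 0)"

definition is_diagonal_section :: "(real \<Rightarrow> real) \<Rightarrow> bool" where
  "is_diagonal_section \<delta> \<longleftrightarrow>
     (\<forall>x. 0 \<le> x \<and> x \<le> 1 \<longrightarrow> \<delta> x \<le> x) \<and>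
     (\<forall>x y. 0 \<le> x \<and> x \<le> y \<and> y \<le> 1 \<longrightarrow> 0 \<le> \<delta> y - \<delta> x \<and> \<delta> y - \<delta> x \<le> 2 * (y - x)) \<and>
     \<delta> 1 = 1"

definition delta_hat :: "(real \<Rightarrow> real) \<Rightarrow> real \<Rightarrow> real" where
  "delta_hat \<delta> x = x - \<delta> x"

definition total_variation :: "(real \<Rightarrow> real) \<Rightarrow> real \<Rightarrow> real \<Rightarrow> real" where
  "total_variation f x y = Sup {(\<Sum>i\<in>{1..n}. \<bar>f (p i) - f (p (i - 1))\<bar>) | p n.
      p 0 = x \<and> p n = y \<and> (\<forall>i<n. p i < p (Suc i))}"

end

theory Submission
  imports Defs
begin

text \<open>Fix \<open>x \<le> y\<close> and put \<open>g t = t - C x t\<close>. For \<open>x \<le> a \<le> b \<le> 1\<close> the rectangle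
  inequality gives \<open>0 \<le> g b - g a\<close> and \<open>\<delta>' b - \<delta>' a \<le> g b - g a\<close>, where
  \<open>\<delta>' = delta_hat \<delta>\<close>. So every increment \<open>\<bar>\<delta>' b - \<delta>' a\<bar>\<close> is dominated by the increment
  of \<open>2 g - \<delta>'\<close>, and the total variation of \<open>\<delta>'\<close> on \<open>[x, y]\<close> is at most
  \<open>2 (g y - g x) - (\<delta>' y - \<delta>' x)\<close>; this rearranges to the third bound. The case \<open>y < x\<close>
  follows by transposing \<open>C\<close>, and the bounds \<open>x\<close>, \<open>y\<close> are the Frechet upper bound.\<close>

lemma partition_points_mono:
  fixes p :: "nat \<Rightarrow> 'a::order"
  assumes step: "\<And>i. i < n \<Longrightarrow> p i \<le> p (Suc i)" and "i \<le> j" "j \<le> n"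
  shows "p i \<le> p j"
  using assms(2,3) by (induction j rule: dec_induct) (auto intro: order_trans[OF _ step])

lemma total_variation_le_dominating_increment:
  fixes f h :: "real \<Rightarrow> real"
  assumes "x \<le> y"
    and dom: "\<And>a b. x \<le> a \<Longrightarrow> a \<le> b \<Longrightarrow> b \<le> y \<Longrightarrow> \<bar>f b - f a\<bar> \<le> h b - h a"
  shows "total_variation f x y \<le> h y - h x"
proof -
  let ?S = "{\<Sum>i\<in>{1..n}. \<bar>f (p i) - f (p (i - 1))\<bar> | p n.
      p 0 = x \<and> p n = y \<and> (\<forall>i<n. p i < p (Suc i))}"
  define q where "q = (\<lambda>i::nat. if i = 0 then x else y)"
  define m where "m = (if x = y then 0 else 1 :: nat)"
  have "q 0 = x \<and> q m = y \<and> (\<forall>i<m. q i < q (Suc i))"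
    using \<open>x \<le> y\<close> by (auto simp: q_def m_def)
  then have "?S \<noteq> {}"
    by blast
  moreover have "s \<le> h y - h x" if "s \<in> ?S" for s
  proof -
    obtain p n where s: "s = (\<Sum>i\<in>{1..n}. \<bar>f (p i) - f (p (i - 1))\<bar>)"
      and p: "p 0 = x" "p n = y" "\<forall>i<n. p i < p (Suc i)"
      using \<open>s \<in> ?S\<close> by blast
    have mono: "p i \<le> p j" if "i \<le> j" "j \<le> n" for i j
      using partition_points_mono[of n p] p(3) that by (simp add: less_imp_le)
    have "s \<le> (\<Sum>k\<in>{1..n}. h (p k) - h (p (k - 1)))"
      unfolding s
    proof (rule sum_mono)
      fix k assume "k \<in> {1..n}"
      then show "\<bar>f (p k) - f (p (k - 1))\<bar> \<le> h (p k) - h (p (k - 1))"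
        using mono[of 0 "k - 1"] mono[of "k - 1" k] mono[of k n] p(1,2) by (intro dom) auto
    qed
    also have "\<dots> = h y - h x"
      using sum_telescope''[of 0 n "\<lambda>k. h (p k)"] p(1,2) by simp
    finally show ?thesis .
  qed
  ultimately show ?thesis
    unfolding total_variation_def by (rule cSup_least)
qed

lemma copula_boundary:
  assumes "is_copula C" "0 \<le> t" "t \<le> 1"
  shows "C t 0 = 0" "C 0 t = 0" "C t 1 = t" "C 1 t = t"
  using assms unfolding is_copula_def by blast+

lemma copula_2_increasing:
  assumes "is_copula C" "0 \<le> a" "a \<le> b" "b \<le> 1" "0 \<le> c" "c \<le> d" "d \<le> 1"
  shows "C a d + C b c \<le> C b d + C a c"
  using assms unfolding is_copula_def by fastforce

lemma copula_transpose:
  assumes "is_copula C"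
  shows "is_copula (\<lambda>u v. C v u)"
  using copula_boundary[OF assms] copula_2_increasing[OF assms]
  unfolding is_copula_def by fastforce

lemma copula_le_left:
  assumes "is_copula C" "0 \<le> u" "u \<le> 1" "0 \<le> v" "v \<le> 1"
  shows "C u v \<le> u"
  using copula_2_increasing[OF assms(1), of 0 u v 1] copula_boundary[OF assms(1)] assms by simp

lemma copula_le_right:
  assumes "is_copula C" "0 \<le> u" "u \<le> 1" "0 \<le> v" "v \<le> 1"
  shows "C u v \<le> v"
  using copula_le_left[OF copula_transpose[OF assms(1)]] assms by simp

lemma copula_mono_left:
  assumes "is_copula C" "0 \<le> a" "a \<le> b" "b \<le> 1" "0 \<le> v" "v \<le> 1"
  shows "C a v \<le> C b v"
  using copula_2_increasing[OF assms(1), of a b 0 v] copula_boundary[OF assms(1)] assms by simp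

lemma copula_increment_right_le:
  assumes "is_copula C" "0 \<le> u" "u \<le> 1" "0 \<le> a" "a \<le> b" "b \<le> 1"
  shows "C u b - C u a \<le> b - a"
  using copula_2_increasing[OF assms(1), of u 1 a b] copula_boundary[OF assms(1)] assms by simp

lemma copula_increment_right_le_diagonal:
  assumes "is_copula C" "0 \<le> u" "u \<le> a" "a \<le> b" "b \<le> 1"
  shows "C u b - C u a \<le> C b b - C a a"
  using copula_2_increasing[OF assms(1), of u b a b] copula_mono_left[OF assms(1), of a b a] assms
  by simp

lemma copula_le_diagonal_variation_bound:
  assumes cop: "is_copula C" and diag: "\<forall>t. 0 \<le> t \<and> t \<le> 1 \<longrightarrow> C t t = \<delta> t"
    and "0 \<le> x" "x \<le> y" "y \<le> 1"
  shows "C x y \<le> y - (delta_hat \<delta> x + delta_hat \<delta> y + total_variation (delta_hat \<delta>) x y) / 2"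
proof -
  define g where "g t = t - C x t" for t
  have "total_variation (delta_hat \<delta>) x y
      \<le> (2 * g y - delta_hat \<delta> y) - (2 * g x - delta_hat \<delta> x)"
  proof (rule total_variation_le_dominating_increment)
    fix a b assume ab: "x \<le> a" "a \<le> b" "b \<le> y"
    have "0 \<le> g b - g a"
      using copula_increment_right_le[OF cop, of x a b] ab assms by (simp add: g_def)
    moreover have "delta_hat \<delta> b - delta_hat \<delta> a \<le> g b - g a"
      using copula_increment_right_le_diagonal[OF cop, of x a b] diag ab assms
      by (simp add: g_def delta_hat_def)
    ultimately show "\<bar>delta_hat \<delta> b - delta_hat \<delta> a\<bar>
        \<le> (2 * g b - delta_hat \<delta> b) - (2 * g a - delta_hat \<delta> a)"
      by linarith
  qed fact
  then show ?thesis
    using diag assms by (simp add: g_def delta_hat_def field_simps)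
qed

theorem proposition3p1:
  fixes \<delta> :: "real \<Rightarrow> real" and C :: "real \<Rightarrow> real \<Rightarrow> real" and x y :: real
  assumes "is_diagonal_section \<delta>"
    and "is_copula C"
    and "\<forall>t. 0 \<le> t \<and> t \<le> 1 \<longrightarrow> C t t = \<delta> t"
    and "0 \<le> x" "x \<le> 1" "0 \<le> y" "y \<le> 1"
  shows "C x y \<le> min x (min y (max x y - (delta_hat \<delta> x + delta_hat \<delta> y
            + total_variation (delta_hat \<delta>) (min x y) (max x y)) / 2))"
proof -
  have "C x y \<le> max x y - (delta_hat \<delta> x + delta_hat \<delta> y
          + total_variation (delta_hat \<delta>) (min x y) (max x y)) / 2"
  proof (cases "x \<le> y")
    case True
    then show ?thesis
      using copula_le_diagonal_variation_bound[OF assms(2,3), of x y] assms by simp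
  next
    case False
    then show ?thesis
      using copula_le_diagonal_variation_bound[OF copula_transpose[OF assms(2)], of \<delta> y x] assms
      by (simp add: add.commute)
  qed
  then show ?thesis
    using copula_le_left[OF assms(2,4-7)] copula_le_right[OF assms(2,4-7)] by simp
qed

end
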